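(* Let $k<l$ be positive integers and let $\gamma\in U(k,l)$ be diagonalizable with all eigenvalues of modulus $1$. Then $\gamma$ has an eigenvector in $N_-^{k,l}\cup N_+^{k,l}$.
   Context: $\prec u,v\succ_{k,l}=-\sum_{j=1}^k u_j\bar v_j+\sum_{j=k+1}^{k+l}u_j\bar v_j$ on $\mathbb{C}^{k+l}$; $N_-^{k,l}$, $N_+^{k,l}$ are the sets of vectors $v$ with $\prec v,v\succ_{k,l}<0$, respectively $>0$; $U(k,l)$ is the group of matrices in $GL(k+l,\mathbb{C})$ preserving the form. *)

theory Defs
  imports Complex_Main "Jordan_Normal_Form.Jordan_Normal_Form"
begin

definition hform :: "nat \<Rightarrow> nat \<Rightarrow> complex vec \<Rightarrow> complex vec \<Rightarrow> complex" where
  "hform k l u v = - (\<Sum>j<k. u $ j * cnj (v $ j)) + (\<Sum>j\<in>{k..<k+l}. u $ j * cnj (v $ j))"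

text \<open>hform k l v v is always real; its sign is read off via Re.\<close>
definition N_minus :: "nat \<Rightarrow> nat \<Rightarrow> complex vec set" where
  "N_minus k l = {v \<in> carrier_vec (k+l). Re (hform k l v v) < 0}"

definition N_plus :: "nat \<Rightarrow> nat \<Rightarrow> complex vec set" where
  "N_plus k l = {v \<in> carrier_vec (k+l). Re (hform k l v v) > 0}"

definition U_group :: "nat \<Rightarrow> nat \<Rightarrow> complex mat set" where
  "U_group k l = {g \<in> carrier_mat (k+l) (k+l). invertible_mat g \<and>
     (\<forall>u\<in>carrier_vec (k+l). \<forall>v\<in>carrier_vec (k+l).
        hform k l (g *\<^sub>v u) (g *\<^sub>v v) = hform k l u v)}"

definition diagonalizable_mat :: "complex mat \<Rightarrow> bool" where
  "diagonalizable_mat A = (\<exists>D. diagonal_mat D \<and> similar_mat A D)"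

end

theory Submission
  imports Defs
begin

text \<open>Suppose every eigenvector of \<gamma> is null. Eigenvectors with distinct eigenvalues
  \<open>\<nu> \<noteq> \<mu>\<close> are then orthogonal, since \<gamma> preserves the form and \<open>\<nu> * cnj \<mu> \<noteq> 1\<close> when
  \<open>cmod \<mu> = 1\<close>; eigenvectors with a common eigenvalue are orthogonal by polarization, because
  their whole span consists of null eigenvectors. A diagonalizable \<gamma> has a basis of
  eigenvectors, so the form would vanish identically, which is absurd.\<close>

definition hform_sign :: "nat \<Rightarrow> nat \<Rightarrow> complex" where
  "hform_sign k j = (if j < k then -1 else 1)"

lemma hform_eq_weighted_sum:
  "hform k l u v = (\<Sum>j<k+l. hform_sign k j * (u $ j * cnj (v $ j)))"
proof -
  have split: "{..<k+l} = {..<k} \<union> {k..<k+l}" by auto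
  have "(\<Sum>j<k+l. hform_sign k j * (u $ j * cnj (v $ j))) =
     (\<Sum>j<k. hform_sign k j * (u $ j * cnj (v $ j)))
     + (\<Sum>j\<in>{k..<k+l}. hform_sign k j * (u $ j * cnj (v $ j)))"
    unfolding split by (rule sum.union_disjoint) auto
  then show ?thesis
    unfolding hform_def hform_sign_def by (simp add: sum_negf)
qed

lemma hform_add_left:
  "u \<in> carrier_vec (k+l) \<Longrightarrow> v \<in> carrier_vec (k+l) \<Longrightarrow>
   hform k l (u + v) w = hform k l u w + hform k l v w"
  unfolding hform_eq_weighted_sum by (simp add: sum.distrib[symmetric] algebra_simps)

lemma hform_add_right:
  "v \<in> carrier_vec (k+l) \<Longrightarrow> w \<in> carrier_vec (k+l) \<Longrightarrow>
   hform k l u (v + w) = hform k l u v + hform k l u w"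
  unfolding hform_eq_weighted_sum by (simp add: sum.distrib[symmetric] algebra_simps)

lemma hform_smult_left:
  "u \<in> carrier_vec (k+l) \<Longrightarrow> hform k l (a \<cdot>\<^sub>v u) w = a * hform k l u w"
  unfolding hform_eq_weighted_sum by (simp add: sum_distrib_left algebra_simps)

lemma hform_smult_right:
  "v \<in> carrier_vec (k+l) \<Longrightarrow> hform k l u (a \<cdot>\<^sub>v v) = cnj a * hform k l u v"
  unfolding hform_eq_weighted_sum by (simp add: sum_distrib_left algebra_simps)

lemma Im_hform_self: "Im (hform k l v v) = 0"
  unfolding hform_def by simp

lemma hform_unit_vec_self:
  "j < k + l \<Longrightarrow> hform k l (unit_vec (k+l) j) (unit_vec (k+l) j) = hform_sign k j"
  unfolding hform_eq_weighted_sum by (simp add: unit_vec_def if_distrib cong: if_cong)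

lemma hform_polarization:
  assumes u: "u \<in> carrier_vec (k+l)" and v: "v \<in> carrier_vec (k+l)"
    and "hform k l u u = 0" "hform k l v v = 0"
    and "hform k l (u + v) (u + v) = 0"
    and "hform k l (u + \<i> \<cdot>\<^sub>v v) (u + \<i> \<cdot>\<^sub>v v) = 0"
  shows "hform k l u v = 0"
proof -
  have sum: "hform k l u v + hform k l v u = 0"
    using assms by (simp add: hform_add_left hform_add_right add.commute)
  have "- \<i> * hform k l u v + \<i> * hform k l v u = 0"
    using assms by (simp add: hform_add_left hform_add_right hform_smult_left
        hform_smult_right algebra_simps)
  with sum have "2 * \<i> * hform k l u v = 0"
    by (simp add: algebra_simps eq_neg_iff_add_eq_0[symmetric])
  then show ?thesis by simp
qed

lemma hform_eigenvectors_orthogonal_distinct: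
  assumes preserves: "hform k l (G *\<^sub>v u) (G *\<^sub>v v) = hform k l u v"
    and u: "u \<in> carrier_vec (k+l)" "G *\<^sub>v u = \<nu> \<cdot>\<^sub>v u"
    and v: "v \<in> carrier_vec (k+l)" "G *\<^sub>v v = \<mu> \<cdot>\<^sub>v v"
    and "cmod \<mu> = 1" and "\<nu> \<noteq> \<mu>"
  shows "hform k l u v = 0"
proof -
  have "hform k l u v = \<nu> * cnj \<mu> * hform k l u v"
    using preserves u v by (simp add: hform_smult_left hform_smult_right mult.commute)
  then have "(1 - \<nu> * cnj \<mu>) * hform k l u v = 0"
    by (simp add: algebra_simps)
  moreover have "\<mu> * cnj \<mu> = 1"
    using \<open>cmod \<mu> = 1\<close> by (metis complex_norm_square of_real_1 power_one)
  then have "\<nu> * cnj \<mu> \<noteq> 1"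
    using \<open>\<nu> \<noteq> \<mu>\<close> by (metis mult.assoc mult.commute mult.right_neutral)
  ultimately show ?thesis by (metis mult_eq_0_iff right_minus_eq)
qed

lemma hform_eigenvectors_orthogonal_if_null:
  assumes \<gamma>: "\<gamma> \<in> U_group k l"
    and unit: "\<forall>\<mu>. eigenvalue \<gamma> \<mu> \<longrightarrow> cmod \<mu> = 1"
    and null: "\<And>w \<kappa>. eigenvector \<gamma> w \<kappa> \<Longrightarrow> hform k l w w = 0"
    and u: "eigenvector \<gamma> u \<nu>" and v: "eigenvector \<gamma> v \<mu>"
  shows "hform k l u v = 0"
proof -
  have G: "\<gamma> \<in> carrier_mat (k+l) (k+l)"
    and preserves: "\<And>x y. x \<in> carrier_vec (k+l) \<Longrightarrow> y \<in> carrier_vec (k+l) \<Longrightarrow>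
        hform k l (\<gamma> *\<^sub>v x) (\<gamma> *\<^sub>v y) = hform k l x y"
    using \<gamma> unfolding U_group_def by blast+
  have uc: "u \<in> carrier_vec (k+l)" "\<gamma> *\<^sub>v u = \<nu> \<cdot>\<^sub>v u"
    and vc: "v \<in> carrier_vec (k+l)" "\<gamma> *\<^sub>v v = \<mu> \<cdot>\<^sub>v v"
    using u v G unfolding eigenvector_def by auto
  show ?thesis
  proof (cases "\<nu> = \<mu>")
    case True
    have null_space: "hform k l w w = 0"
      if "w \<in> carrier_vec (k+l)" "\<gamma> *\<^sub>v w = \<nu> \<cdot>\<^sub>v w" for w
      using that null[of w \<nu>] G
      by (cases "w = 0\<^sub>v (k+l)") (auto simp: eigenvector_def hform_eq_weighted_sum)
    have "\<gamma> *\<^sub>v (u + v) = \<nu> \<cdot>\<^sub>v (u + v)"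
      using uc vc G True by (simp add: mult_add_distrib_mat_vec smult_add_distrib_vec)
    then have sum: "hform k l (u + v) (u + v) = 0"
      using uc vc by (intro null_space) auto
    have "\<gamma> *\<^sub>v (u + \<i> \<cdot>\<^sub>v v) = \<nu> \<cdot>\<^sub>v (u + \<i> \<cdot>\<^sub>v v)"
      using uc vc G True by (simp add: mult_add_distrib_mat_vec smult_add_distrib_vec
          mult_mat_vec smult_smult_assoc mult.commute)
    then have twisted_sum: "hform k l (u + \<i> \<cdot>\<^sub>v v) (u + \<i> \<cdot>\<^sub>v v) = 0"
      using uc vc by (intro null_space) auto
    have "hform k l v v = 0"
      using vc True by (intro null_space) auto
    then show ?thesis
      by (rule hform_polarization[OF uc(1) vc(1) null_space[OF uc] _ sum twisted_sum])
  next
    case False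
    have "eigenvalue \<gamma> \<mu>"
      using v unfolding eigenvalue_def by blast
    then show ?thesis
      using False unit hform_eigenvectors_orthogonal_distinct[OF preserves[OF uc(1) vc(1)] uc vc]
      by auto
  qed
qed

lemma diagonalizable_mat_eigenbasis:
  assumes A: "A \<in> carrier_mat n n" and "diagonalizable_mat A"
  obtains P Q where "P \<in> carrier_mat n n" "Q \<in> carrier_mat n n" "P * Q = 1\<^sub>m n"
    and "\<And>a. a < n \<Longrightarrow> \<exists>\<mu>. eigenvector A (col P a) \<mu>"
proof -
  obtain D where diag: "diagonal_mat D" and "similar_mat A D"
    using assms(2) unfolding diagonalizable_mat_def by auto
  then obtain m P Q where carrier: "{A, D, P, Q} \<subseteq> carrier_mat m m"
    and PQ: "P * Q = 1\<^sub>m m" and QP: "Q * P = 1\<^sub>m m" and AD: "A = P * D * Q"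
    using similar_matD by blast
  have "m = n" using A carrier by auto
  then have P: "P \<in> carrier_mat n n" and Q: "Q \<in> carrier_mat n n" and D: "D \<in> carrier_mat n n"
    using carrier by auto
  have AP: "A * P = P * D"
    using P Q D \<open>m = n\<close> QP by (simp add: AD assoc_mult_mat[of _ n n _ n _ n])
  have "eigenvector A (col P a) (D $$ (a,a))" if a: "a < n" for a
  proof -
    have "col D a = D $$ (a,a) \<cdot>\<^sub>v unit_vec n a"
      using D a diag unfolding diagonal_mat_def by (intro eq_vecI) auto
    then have "A *\<^sub>v col P a = D $$ (a,a) \<cdot>\<^sub>v (P *\<^sub>v unit_vec n a)"
      using AP A P D a by (metis col_mult2 mult_mat_vec unit_vec_carrier)
    also have "P *\<^sub>v unit_vec n a = col P a"
      using col_mult2[of P n n "1\<^sub>m n" n a] P a by simp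
    finally have eigen: "A *\<^sub>v col P a = D $$ (a,a) \<cdot>\<^sub>v col P a" .
    have "Q *\<^sub>v col P a = unit_vec n a"
      using col_mult2[OF Q P a] QP \<open>m = n\<close> a by simp
    have "col P a \<noteq> 0\<^sub>v n"
    proof
      assume "col P a = 0\<^sub>v n"
      then have "unit_vec n a $ a = (Q *\<^sub>v 0\<^sub>v n) $ a"
        using \<open>Q *\<^sub>v col P a = unit_vec n a\<close> by simp
      then show False
        using Q a by simp
    qed
    then show ?thesis
      using eigen A P unfolding eigenvector_def by auto
  qed
  then show thesis
    using that P Q PQ \<open>m = n\<close> by blast
qed

lemma hform_mult_mat_vec:
  assumes P: "P \<in> carrier_mat (k+l) (k+l)"
    and x: "x \<in> carrier_vec (k+l)" and y: "y \<in> carrier_vec (k+l)"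
  shows "hform k l (P *\<^sub>v x) (P *\<^sub>v y) =
    (\<Sum>a<k+l. \<Sum>b<k+l. x $ a * cnj (y $ b) * hform k l (col P a) (col P b))"
proof -
  let ?n = "k+l"
  let ?term = "\<lambda>j a b. x $ a * cnj (y $ b) * (hform_sign k j * (P $$ (j,a) * cnj (P $$ (j,b))))"
  have entry: "(P *\<^sub>v z) $ j = (\<Sum>a<?n. P $$ (j,a) * z $ a)"
    if "z \<in> carrier_vec ?n" "j < ?n" for z j
    using P that by (auto simp: scalar_prod_def row_def lessThan_atLeast0)
  have "hform k l (P *\<^sub>v x) (P *\<^sub>v y) =
     (\<Sum>j<?n. hform_sign k j * ((\<Sum>a<?n. P $$ (j,a) * x $ a) * cnj (\<Sum>b<?n. P $$ (j,b) * y $ b)))"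
    unfolding hform_eq_weighted_sum using x y by (intro sum.cong) (auto simp: entry)
  also have "\<dots> = (\<Sum>j<?n. \<Sum>b<?n. \<Sum>a<?n. ?term j a b)"
    by (simp add: sum_distrib_left sum_distrib_right mult.assoc mult.left_commute)
      (intro sum.cong refl, simp add: mult_ac)
  also have "\<dots> = (\<Sum>j<?n. \<Sum>a<?n. \<Sum>b<?n. ?term j a b)"
    by (rule sum.cong[OF refl], rule sum.swap)
  also have "\<dots> = (\<Sum>a<?n. \<Sum>j<?n. \<Sum>b<?n. ?term j a b)"
    by (rule sum.swap)
  also have "\<dots> = (\<Sum>a<?n. \<Sum>b<?n. \<Sum>j<?n. ?term j a b)"
    by (rule sum.cong[OF refl], rule sum.swap)
  also have "\<dots> = (\<Sum>a<?n. \<Sum>b<?n. x $ a * cnj (y $ b) * hform k l (col P a) (col P b))"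
    unfolding hform_eq_weighted_sum using P by (auto simp: sum_distrib_left intro!: sum.cong)
  finally show ?thesis .
qed

theorem mainTheorem16:
  fixes k l :: nat and \<gamma> :: "complex mat"
  assumes "0 < k" and "k < l"
    and "\<gamma> \<in> U_group k l"
    and "diagonalizable_mat \<gamma>"
    and "\<forall>\<mu>. eigenvalue \<gamma> \<mu> \<longrightarrow> cmod \<mu> = 1"
  shows "\<exists>v \<mu>. eigenvector \<gamma> v \<mu> \<and> v \<in> N_minus k l \<union> N_plus k l"
proof (rule ccontr)
  assume no_eigenvector: "\<not> ?thesis"
  let ?n = "k + l"
  have G: "\<gamma> \<in> carrier_mat ?n ?n"
    using assms(3) unfolding U_group_def by blast
  have eigenvectors_null: "hform k l v v = 0" if "eigenvector \<gamma> v \<mu>" for v \<mu>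
    using that no_eigenvector G Im_hform_self[of k l v]
    unfolding eigenvector_def N_minus_def N_plus_def by (auto simp: complex_eq_iff)
  obtain P Q where P: "P \<in> carrier_mat ?n ?n" and Q: "Q \<in> carrier_mat ?n ?n"
    and PQ: "P * Q = 1\<^sub>m ?n" and eigenbasis: "\<And>a. a < ?n \<Longrightarrow> \<exists>\<mu>. eigenvector \<gamma> (col P a) \<mu>"
    using diagonalizable_mat_eigenbasis[OF G assms(4)] by blast
  have orthogonal: "hform k l (col P a) (col P b) = 0" if a: "a < ?n" and b: "b < ?n" for a b
  proof -
    obtain \<mu> \<nu> where "eigenvector \<gamma> (col P a) \<mu>" "eigenvector \<gamma> (col P b) \<nu>"
      using eigenbasis[OF a] eigenbasis[OF b] by blast
    with assms(3,5) eigenvectors_null show ?thesis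
      by (rule hform_eigenvectors_orthogonal_if_null)
  qed
  define e :: "complex vec" where "e = unit_vec ?n 0"
  have "P *\<^sub>v (Q *\<^sub>v e) = e"
    using P Q PQ unfolding e_def by (metis assoc_mult_mat_vec one_mult_mat_vec unit_vec_carrier)
  then have "hform k l e e = 0"
    using hform_mult_mat_vec[OF P, of "Q *\<^sub>v e" "Q *\<^sub>v e"] Q orthogonal unfolding e_def by simp
  moreover have "hform k l e e = -1"
    using hform_unit_vec_self[of 0 k l] assms(1) unfolding e_def hform_sign_def by simp
  ultimately show False by simp
qed

end
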